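(* Let $M$ be a Poisson manifold with a local star product $*$ and let $\omega:C^\infty_0(M)[[\lambda]]\to\mathbb C[[\lambda]]$ be a positive $\mathbb C[[\lambda]]$-linear functional. Then $\omega$ is faithful if and only if $\operatorname{supp}\omega=M$.
   Context: $C^\infty(M)$ denotes complex-valued smooth functions and $\lambda$ is a formal parameter. A (local) star product $*$ on $M$ is an associative $\mathbb C[[\lambda]]$-bilinear product on $C^\infty(M)[[\lambda]]$ with $f*g=\sum_{r\ge0}\lambda^rM_r(f,g)$ for $f,g\in C^\infty(M)$, where the $M_r$ are local operators, $M_0(f,g)=fg$, $M_1(f,g)-M_1(g,f)=\mathrm i\{f,g\}$, $M_r$ vanishes on constants for $r\ge1$, and $\overline{f*g}=\bar g*\bar f$ ($\bar\lambda=\lambda$). $C^\infty_0(O)[[\lambda]]$ is the set of series all of whose coefficients have compact support in the open set $O$. $\mathbb R[[\lambda]]$ is ordered by: $a>0$ iff its lowest-order nonzero coefficient is positive; $\omega$ is positive if $\omega(\bar f*f)\ge0$ for all $f$. $\operatorname{supp}\omega$ is the complement of the union of all open $O$ with $\omega|_{C^\infty_0(O)[[\lambda]]}=0$. $\omega$ is faithful if its Gel'fand ideal $\mathcal J_\omega=\{f\in C^\infty_0(M)[[\lambda]]:\omega(\bar f*f)=0\}$ equals $\{0\}$. *)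

theory Defs
  imports "HOL-Analysis.Analysis"
begin

text \<open>C-infinity on an open subset of a real normed space: there is a family D of
  iterated Frechet derivatives (indexed by the list of directions), D [] = f on S,
  and each D vs is Frechet differentiable at every point of S with derivative
  v maps to D (v # vs).\<close>
definition smooth_on :: "'e::real_normed_vector set \<Rightarrow> ('e \<Rightarrow> 'f::real_normed_vector) \<Rightarrow> bool" where
  "smooth_on S f \<longleftrightarrow>
     (\<exists>D :: 'e list \<Rightarrow> 'e \<Rightarrow> 'f.
        (\<forall>x\<in>S. D [] x = f x) \<and>
        (\<forall>vs. \<forall>x\<in>S. (D vs has_derivative (\<lambda>v. D (v # vs) x)) (at x)))"

definition is_chart :: "'m::topological_space set \<Rightarrow> ('m \<Rightarrow> 'e::euclidean_space) \<Rightarrow> bool" where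
  "is_chart U \<phi> \<longleftrightarrow> open U \<and> open (\<phi> ` U) \<and> homeomorphism U (\<phi> ` U) \<phi> (inv_into U \<phi>)"

definition smooth_atlas :: "('m::topological_space set \<times> ('m \<Rightarrow> 'e::euclidean_space)) set \<Rightarrow> bool" where
  "smooth_atlas A \<longleftrightarrow>
     (\<forall>(U,\<phi>)\<in>A. is_chart U \<phi>) \<and>
     (\<Union>(fst ` A) = UNIV) \<and>
     (\<forall>(U,\<phi>)\<in>A. \<forall>(V,\<psi>)\<in>A. smooth_on (\<phi> ` (U \<inter> V)) (\<psi> \<circ> inv_into U \<phi>))"

definition smooth_fun :: "('m::topological_space set \<times> ('m \<Rightarrow> 'e::euclidean_space)) set \<Rightarrow> ('m \<Rightarrow> complex) \<Rightarrow> bool" where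
  "smooth_fun A f \<longleftrightarrow> (\<forall>(U,\<phi>)\<in>A. smooth_on (\<phi> ` U) (f \<circ> inv_into U \<phi>))"

definition fsupp :: "('m::topological_space \<Rightarrow> complex) \<Rightarrow> 'm set" where
  "fsupp f = closure {x. f x \<noteq> 0}"

text \<open>A Poisson bracket on C-infinity(M) (complex-bilinearly extended): a Lie bracket
  satisfying the Leibniz rule and mapping real functions to real functions.\<close>
definition poisson_bracket ::
  "('m::topological_space set \<times> ('m \<Rightarrow> 'e::euclidean_space)) set \<Rightarrow>
   (('m \<Rightarrow> complex) \<Rightarrow> ('m \<Rightarrow> complex) \<Rightarrow> ('m \<Rightarrow> complex)) \<Rightarrow> bool" where
  "poisson_bracket A pb \<longleftrightarrow>
     (\<forall>f g h (c::complex). smooth_fun A f \<and> smooth_fun A g \<and> smooth_fun A h \<longrightarrow>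
        smooth_fun A (pb f g) \<and>
        pb f g = (\<lambda>x. - pb g f x) \<and>
        pb (\<lambda>x. f x + g x) h = (\<lambda>x. pb f h x + pb g h x) \<and>
        pb (\<lambda>x. c * f x) g = (\<lambda>x. c * pb f g x) \<and>
        (\<lambda>x. pb f (pb g h) x + pb g (pb h f) x + pb h (pb f g) x) = (\<lambda>x. 0) \<and>
        pb f (\<lambda>x. g x * h x) = (\<lambda>x. pb f g x * h x + g x * pb f h x) \<and>
        pb (\<lambda>x. cnj (f x)) (\<lambda>x. cnj (g x)) = (\<lambda>x. cnj (pb f g x)))"

text \<open>Elements of C-infinity(M)[[lambda]] are represented as coefficient sequences
  nat => ('m => complex); elements of C[[lambda]] as nat => complex.\<close>

definition star :: "(nat \<Rightarrow> ('m \<Rightarrow> complex) \<Rightarrow> ('m \<Rightarrow> complex) \<Rightarrow> ('m \<Rightarrow> complex)) \<Rightarrow>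
                    (nat \<Rightarrow> 'm \<Rightarrow> complex) \<Rightarrow> (nat \<Rightarrow> 'm \<Rightarrow> complex) \<Rightarrow> (nat \<Rightarrow> 'm \<Rightarrow> complex)" where
  "star Mr F G = (\<lambda>n x. \<Sum>r\<le>n. \<Sum>s\<le>n - r. Mr r (F s) (G (n - r - s)) x)"

definition series_cnj :: "(nat \<Rightarrow> 'm \<Rightarrow> complex) \<Rightarrow> (nat \<Rightarrow> 'm \<Rightarrow> complex)" where
  "series_cnj F = (\<lambda>n x. cnj (F n x))"

definition fps_smult :: "(nat \<Rightarrow> complex) \<Rightarrow> (nat \<Rightarrow> 'm \<Rightarrow> complex) \<Rightarrow> (nat \<Rightarrow> 'm \<Rightarrow> complex)" where
  "fps_smult a F = (\<lambda>n x. \<Sum>k\<le>n. a k * F (n - k) x)"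

definition fps_cmult :: "(nat \<Rightarrow> complex) \<Rightarrow> (nat \<Rightarrow> complex) \<Rightarrow> (nat \<Rightarrow> complex)" where
  "fps_cmult a b = (\<lambda>n. \<Sum>k\<le>n. a k * b (n - k))"

definition local_star_product ::
  "('m::topological_space set \<times> ('m \<Rightarrow> 'e::euclidean_space)) set \<Rightarrow>
   (('m \<Rightarrow> complex) \<Rightarrow> ('m \<Rightarrow> complex) \<Rightarrow> ('m \<Rightarrow> complex)) \<Rightarrow>
   (nat \<Rightarrow> ('m \<Rightarrow> complex) \<Rightarrow> ('m \<Rightarrow> complex) \<Rightarrow> ('m \<Rightarrow> complex)) \<Rightarrow> bool" where
  "local_star_product A pb Mr \<longleftrightarrow>
     (\<forall>r f g h (c::complex). smooth_fun A f \<and> smooth_fun A g \<and> smooth_fun A h \<longrightarrow>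
        smooth_fun A (Mr r f g) \<and>
        Mr r (\<lambda>x. f x + g x) h = (\<lambda>x. Mr r f h x + Mr r g h x) \<and>
        Mr r h (\<lambda>x. f x + g x) = (\<lambda>x. Mr r h f x + Mr r h g x) \<and>
        Mr r (\<lambda>x. c * f x) g = (\<lambda>x. c * Mr r f g x) \<and>
        Mr r g (\<lambda>x. c * f x) = (\<lambda>x. c * Mr r g f x) \<and>
        (\<forall>U. open U \<and> (\<forall>x\<in>U. f x = 0) \<longrightarrow> (\<forall>x\<in>U. Mr r f g x = 0 \<and> Mr r g f x = 0)) \<and>
        (r \<ge> 1 \<longrightarrow> Mr r (\<lambda>x. c) f = (\<lambda>x. 0) \<and> Mr r f (\<lambda>x. c) = (\<lambda>x. 0)) \<and>
        (\<lambda>x. cnj (Mr r f g x)) = Mr r (\<lambda>x. cnj (g x)) (\<lambda>x. cnj (f x)) \<and>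
        (\<forall>x. (\<Sum>s\<le>r. Mr s (Mr (r - s) f g) h x) = (\<Sum>s\<le>r. Mr s f (Mr (r - s) g h) x))) \<and>
     (\<forall>f g. smooth_fun A f \<and> smooth_fun A g \<longrightarrow>
        Mr 0 f g = (\<lambda>x. f x * g x) \<and>
        (\<lambda>x. Mr 1 f g x - Mr 1 g f x) = (\<lambda>x. \<i> * pb f g x))"

definition C0_series ::
  "('m::topological_space set \<times> ('m \<Rightarrow> 'e::euclidean_space)) set \<Rightarrow> 'm set \<Rightarrow> (nat \<Rightarrow> 'm \<Rightarrow> complex) set" where
  "C0_series A W = {F. \<forall>n. smooth_fun A (F n) \<and> compact (fsupp (F n)) \<and> fsupp (F n) \<subseteq> W}"

text \<open>Order on R[[lambda]] (inside C[[lambda]]): a >= 0 iff a is real and either a = 0 or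
  its lowest-order nonzero coefficient is positive.\<close>
definition fps_nonneg :: "(nat \<Rightarrow> complex) \<Rightarrow> bool" where
  "fps_nonneg a \<longleftrightarrow> (\<forall>n. Im (a n) = 0) \<and> (a = (\<lambda>n. 0) \<or> Re (a (LEAST n. a n \<noteq> 0)) > 0)"

definition positive_functional ::
  "('m::topological_space set \<times> ('m \<Rightarrow> 'e::euclidean_space)) set \<Rightarrow>
   (nat \<Rightarrow> ('m \<Rightarrow> complex) \<Rightarrow> ('m \<Rightarrow> complex) \<Rightarrow> ('m \<Rightarrow> complex)) \<Rightarrow>
   ((nat \<Rightarrow> 'm \<Rightarrow> complex) \<Rightarrow> (nat \<Rightarrow> complex)) \<Rightarrow> bool" where
  "positive_functional A Mr \<omega> \<longleftrightarrow>
     (\<forall>F\<in>C0_series A UNIV. \<forall>G\<in>C0_series A UNIV. \<omega> (\<lambda>n x. F n x + G n x) = (\<lambda>n. \<omega> F n + \<omega> G n)) \<and>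
     (\<forall>a. \<forall>F\<in>C0_series A UNIV. \<omega> (fps_smult a F) = fps_cmult a (\<omega> F)) \<and>
     (\<forall>F\<in>C0_series A UNIV. fps_nonneg (\<omega> (star Mr (series_cnj F) F)))"

definition faithful ::
  "('m::topological_space set \<times> ('m \<Rightarrow> 'e::euclidean_space)) set \<Rightarrow>
   (nat \<Rightarrow> ('m \<Rightarrow> complex) \<Rightarrow> ('m \<Rightarrow> complex) \<Rightarrow> ('m \<Rightarrow> complex)) \<Rightarrow>
   ((nat \<Rightarrow> 'm \<Rightarrow> complex) \<Rightarrow> (nat \<Rightarrow> complex)) \<Rightarrow> bool" where
  "faithful A Mr \<omega> \<longleftrightarrow>
     {F \<in> C0_series A UNIV. \<omega> (star Mr (series_cnj F) F) = (\<lambda>n. 0)} = {(\<lambda>n x. 0)}"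

definition functional_supp ::
  "('m::topological_space set \<times> ('m \<Rightarrow> 'e::euclidean_space)) set \<Rightarrow>
   ((nat \<Rightarrow> 'm \<Rightarrow> complex) \<Rightarrow> (nat \<Rightarrow> complex)) \<Rightarrow> 'm set" where
  "functional_supp A \<omega> =
     - \<Union>{W. open W \<and> (\<forall>F\<in>C0_series A W. \<omega> F = (\<lambda>n. 0))}"

end

theory Submission
  imports Defs "HOL-Computational_Algebra.Polynomial"
begin

text \<open>If \<open>\<omega>(F\<^sup>* * F) = 0\<close>, a Cauchy--Schwarz argument on lowest-order coefficients gives
  \<open>\<omega>(G\<^sup>* * F) = 0\<close> for every \<open>G\<close>.  Let \<open>F \<noteq> 0\<close> have lowest nonzero coefficient \<open>F\<^sub>k\<close>.
  For every \<open>h\<close> supported in the open set \<open>{F\<^sub>k \<noteq> 0}\<close> the equation \<open>K * F = \<lambda>\<^sup>k h\<close> can be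
  solved order by order, dividing by \<open>F\<^sub>k\<close>; then \<open>\<omega>(\<lambda>\<^sup>k h) = \<omega>(K * F) = 0\<close> by the first step,
  so \<open>\<omega>\<close> vanishes near every point where \<open>F\<^sub>k \<noteq> 0\<close> and cannot have full support.
  Conversely, if \<open>\<omega>\<close> vanishes on an open set, a bump function \<open>f\<close> supported there has
  \<open>f\<^sup>* * f\<close> supported there too, by locality of the star product, so \<open>\<omega>(f\<^sup>* * f) = 0\<close>
  although \<open>f \<noteq> 0\<close>.\<close>

section \<open>Finitely differentiable maps on open sets\<close>

fun Ck_on :: "nat \<Rightarrow> 'a::real_normed_vector set \<Rightarrow> ('a \<Rightarrow> 'b::real_normed_vector) \<Rightarrow> bool" where
  "Ck_on 0 S f \<longleftrightarrow> True"
| "Ck_on (Suc n) S f \<longleftrightarrow>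
     (\<forall>x\<in>S. f differentiable (at x)) \<and> (\<forall>v. Ck_on n S (\<lambda>x. frechet_derivative f (at x) v))"

lemma Ck_on_has_derivative:
  "Ck_on (Suc n) S f \<Longrightarrow> x \<in> S \<Longrightarrow> (f has_derivative frechet_derivative f (at x)) (at x)"
  using frechet_derivative_works by auto

lemma Ck_on_SucD: "Ck_on (Suc n) S f \<Longrightarrow> Ck_on n S f"
  by (induction n arbitrary: f) auto

lemma Ck_on_subset: "Ck_on n S f \<Longrightarrow> T \<subseteq> S \<Longrightarrow> Ck_on n T f"
  by (induction n arbitrary: f) auto

lemma Ck_on_Un: "Ck_on n S f \<Longrightarrow> Ck_on n T f \<Longrightarrow> Ck_on n (S \<union> T) f"
  by (induction n arbitrary: f) auto

lemma Ck_on_cong: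
  assumes "open S" "Ck_on n S f" "\<And>x. x \<in> S \<Longrightarrow> f x = g x"
  shows "Ck_on n S g"
  using assms(2,3)
proof (induction n arbitrary: f g)
  case 0
  then show ?case by simp
next
  case (Suc n)
  have g': "(g has_derivative frechet_derivative f (at x)) (at x)" if "x \<in> S" for x
    using has_derivative_transform_within_open[OF Ck_on_has_derivative[OF Suc.prems(1) that]]
      assms(1) that Suc.prems(2) by blast
  have "g differentiable (at x)" if "x \<in> S" for x
    using differentiableI[OF g'[OF that]] .
  moreover have "Ck_on n S (\<lambda>x. frechet_derivative g (at x) v)" for v
  proof (rule Suc.IH)
    show "Ck_on n S (\<lambda>x. frechet_derivative f (at x) v)"
      using Suc.prems(1) by simp
    show "frechet_derivative f (at x) v = frechet_derivative g (at x) v" if "x \<in> S" for x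
      using frechet_derivative_at[OF g'[OF that]] by simp
  qed
  ultimately show ?case
    by simp
qed

lemma Ck_onI:
  assumes "open S" "\<And>x. x \<in> S \<Longrightarrow> (f has_derivative f' x) (at x)" "\<And>v. Ck_on n S (\<lambda>x. f' x v)"
  shows "Ck_on (Suc n) S f"
proof -
  have "Ck_on n S (\<lambda>x. frechet_derivative f (at x) v)" for v
    using assms(1,3) by (rule Ck_on_cong) (simp add: frechet_derivative_at[OF assms(2)])
  moreover have "f differentiable (at x)" if "x \<in> S" for x
    using differentiableI[OF assms(2)[OF that]] .
  ultimately show ?thesis
    by simp
qed

lemma Ck_on_const: "open S \<Longrightarrow> Ck_on n S (\<lambda>x. c)"
  by (induction n arbitrary: c) (auto intro!: Ck_onI[where f'="\<lambda>x v. 0"])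

lemma Ck_on_linear:
  assumes "open S" "bounded_linear L" "Ck_on n S f"
  shows "Ck_on n S (\<lambda>x. L (f x))"
  using assms(3)
proof (induction n arbitrary: f)
  case (Suc n)
  show ?case
    using Suc bounded_linear.has_derivative[OF assms(2) Ck_on_has_derivative[OF Suc.prems]]
    by (intro Ck_onI[OF assms(1)]) auto
qed simp

lemma Ck_on_add:
  assumes "open S" "Ck_on n S f" "Ck_on n S g"
  shows "Ck_on n S (\<lambda>x. f x + g x)"
  using assms(2,3)
proof (induction n arbitrary: f g)
  case (Suc n)
  show ?case
    using Suc has_derivative_add[OF Ck_on_has_derivative[OF Suc.prems(1)]
        Ck_on_has_derivative[OF Suc.prems(2)]]
    by (intro Ck_onI[OF assms(1)]) auto
qed simp

lemma Ck_on_bilinear: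
  assumes "open S" "bounded_bilinear b" "Ck_on n S f" "Ck_on n S g"
  shows "Ck_on n S (\<lambda>x. b (f x) (g x))"
  using assms(3,4)
proof (induction n arbitrary: f g)
  case (Suc n)
  let ?f' = "\<lambda>x. frechet_derivative f (at x)" and ?g' = "\<lambda>x. frechet_derivative g (at x)"
  show ?case
  proof (rule Ck_onI[OF assms(1)])
    show "((\<lambda>x. b (f x) (g x)) has_derivative (\<lambda>v. b (f x) (?g' x v) + b (?f' x v) (g x))) (at x)"
      if "x \<in> S" for x
      using bounded_bilinear.FDERIV[OF assms(2) Ck_on_has_derivative[OF Suc.prems(1) that]
          Ck_on_has_derivative[OF Suc.prems(2) that]] .
    have "Ck_on n S f" "Ck_on n S g"
      using Suc.prems Ck_on_SucD by blast+
    moreover have "Ck_on n S (\<lambda>x. ?f' x v)" "Ck_on n S (\<lambda>x. ?g' x v)" for v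
      using Suc.prems by simp_all
    ultimately show "Ck_on n S (\<lambda>x. b (f x) (?g' x v) + b (?f' x v) (g x))" for v
      using Ck_on_add[OF assms(1)] Suc.IH by blast
  qed
qed simp

lemma Ck_on_inverse:
  fixes f :: "'a::real_normed_vector \<Rightarrow> 'b::real_normed_div_algebra"
  assumes "open S" "\<And>n. Ck_on n S f" "\<And>x. x \<in> S \<Longrightarrow> f x \<noteq> 0"
  shows "Ck_on n S (\<lambda>x. inverse (f x))"
proof (induction n)
  case (Suc n)
  let ?f' = "\<lambda>x. frechet_derivative f (at x)"
  show ?case
  proof (rule Ck_onI[OF assms(1)])
    show "((\<lambda>x. inverse (f x)) has_derivative (\<lambda>v. - (inverse (f x) * ?f' x v * inverse (f x)))) (at x)"
      if "x \<in> S" for x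
      using Deriv.has_derivative_inverse[OF assms(3)[OF that]
          Ck_on_has_derivative[OF assms(2)[of "Suc 0"] that]]
      by simp
    have "Ck_on n S (\<lambda>x. ?f' x v)" for v
      using assms(2)[of "Suc n"] by simp
    then have "Ck_on n S (\<lambda>x. inverse (f x) * ?f' x v * inverse (f x))" for v
      by (intro Ck_on_bilinear[OF assms(1) bounded_bilinear_mult] Suc.IH)
    then show "Ck_on n S (\<lambda>x. - (inverse (f x) * ?f' x v * inverse (f x)))" for v
      by (rule Ck_on_linear[OF assms(1) bounded_linear_minus[OF bounded_linear_ident]])
  qed
qed simp

lemma Ck_on_compose_real:
  fixes q :: "'a::real_normed_vector \<Rightarrow> real"
  assumes "open S" "\<And>n. Ck_on n S q" "\<And>k t. (g k has_real_derivative g (Suc k) t) (at t)"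
  shows "Ck_on n S (\<lambda>x. g k (q x))"
proof (induction n arbitrary: k)
  case (Suc n)
  let ?q' = "\<lambda>x. frechet_derivative q (at x)"
  show ?case
  proof (rule Ck_onI[OF assms(1)])
    show "((\<lambda>x. g k (q x)) has_derivative (\<lambda>v. g (Suc k) (q x) * ?q' x v)) (at x)" if "x \<in> S" for x
      using diff_chain_at[OF Ck_on_has_derivative[OF assms(2)[of "Suc 0"] that],
          of "g k" "\<lambda>h. g (Suc k) (q x) * h"] assms(3)
      by (simp add: has_field_derivative_def o_def)
    show "Ck_on n S (\<lambda>x. g (Suc k) (q x) * ?q' x v)" for v
      using assms(2)[of "Suc n"] Suc by (intro Ck_on_bilinear[OF assms(1) bounded_bilinear_mult]) auto
  qed
qed simp

lemma smooth_on_iff_Ck_on: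
  assumes "open S"
  shows "smooth_on S f \<longleftrightarrow> (\<forall>n. Ck_on n S f)"
proof
  assume "smooth_on S f"
  then obtain D where D0: "\<forall>x\<in>S. D [] x = f x"
    and DD: "\<forall>vs. \<forall>x\<in>S. (D vs has_derivative (\<lambda>v. D (v # vs) x)) (at x)"
    unfolding smooth_on_def by blast
  have "Ck_on n S (D vs)" for n vs
  proof (induction n arbitrary: vs)
    case (Suc n)
    show ?case
      using DD Suc by (intro Ck_onI[OF assms, where f'="\<lambda>x v. D (v # vs) x"]) auto
  qed simp
  then show "\<forall>n. Ck_on n S f"
    using Ck_on_cong[OF assms] D0 by metis
next
  assume C: "\<forall>n. Ck_on n S f"
  define D :: "'a list \<Rightarrow> 'a \<Rightarrow> 'b" where
    "D = rec_list f (\<lambda>v vs d x. frechet_derivative d (at x) v)"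
  have CD: "Ck_on n S (D vs)" for n vs
  proof (induction vs arbitrary: n)
    case (Cons v vs)
    show ?case
      using Cons.IH[of "Suc n"] by (simp add: D_def)
  qed (use C in \<open>simp add: D_def\<close>)
  show "smooth_on S f"
    unfolding smooth_on_def
  proof (intro exI[of _ D] conjI ballI allI)
    show "(D vs has_derivative (\<lambda>v. D (v # vs) x)) (at x)" if "x \<in> S" for vs x
      using Ck_on_has_derivative[OF CD[of "Suc 0"] that] by (simp add: D_def)
  qed (simp add: D_def)
qed

section \<open>The flat function \<open>exp (-1/t)\<close>\<close>

text \<open>For \<open>t > 0\<close> the \<open>k\<close>-th derivative of \<open>exp (-1/t)\<close> is \<open>p\<^sub>k(1/t) exp (-1/t)\<close>, where
  differentiating gives \<open>p\<^sub>k\<^sub>+\<^sub>1(u) = u\<^sup>2 (p\<^sub>k(u) - p\<^sub>k'(u))\<close>; all of them tend to \<open>0\<close> at \<open>0\<close>.\<close>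

primrec exp_recip_poly :: "nat \<Rightarrow> real poly" where
  "exp_recip_poly 0 = 1"
| "exp_recip_poly (Suc k) = [:0, 0, 1:] * (exp_recip_poly k - pderiv (exp_recip_poly k))"

definition exp_recip_deriv :: "nat \<Rightarrow> real \<Rightarrow> real" where
  "exp_recip_deriv k t = (if t > 0 then poly (exp_recip_poly k) (inverse t) * exp (- inverse t) else 0)"

lemma poly_times_exp_neg_tendsto_0: "((\<lambda>u. poly p u * exp (- u)) \<longlongrightarrow> (0::real)) at_top"
proof -
  have "poly p u * exp (- u) = (\<Sum>i\<le>degree p. coeff p i * (u ^ i / exp u))" for u
    by (simp add: poly_altdef sum_distrib_right exp_minus divide_inverse mult.assoc)
  moreover have "((\<lambda>u. \<Sum>i\<le>degree p. coeff p i * (u ^ i / exp u)) \<longlongrightarrow> (\<Sum>i\<le>degree p. coeff p i * 0)) at_top"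
    by (intro tendsto_sum tendsto_mult tendsto_const tendsto_power_div_exp_0)
  ultimately show ?thesis
    by simp
qed

lemma exp_recip_deriv_has_derivative:
  "(exp_recip_deriv k has_real_derivative exp_recip_deriv (Suc k) t) (at t)"
proof (cases t "0::real" rule: linorder_cases)
  case less
  have "(exp_recip_deriv k has_real_derivative 0) (at t)"
    by (rule has_field_derivative_transform_within_open[OF DERIV_const, where S="{..<0}"])
      (use less in \<open>auto simp: exp_recip_deriv_def\<close>)
  then show ?thesis
    using less by (simp add: exp_recip_deriv_def)
next
  case equal
  have "((\<lambda>h. exp_recip_deriv k h / h) \<longlongrightarrow> 0) (at_left 0)"
    by (rule Lim_transform_eventually[OF tendsto_const])
      (auto simp: exp_recip_deriv_def eventually_at_left_field intro!: exI[of _ "-1"])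
  moreover have "((\<lambda>h. exp_recip_deriv k h / h) \<longlongrightarrow> 0) (at_right 0)"
    by (rule Lim_transform_eventually[OF filterlim_compose[OF poly_times_exp_neg_tendsto_0
          filterlim_inverse_at_top_right, of "pCons 0 (exp_recip_poly k)"]])
      (auto simp: exp_recip_deriv_def divide_inverse eventually_at_right_field intro!: exI[of _ 1])
  ultimately have "((\<lambda>h. exp_recip_deriv k h / h) \<longlongrightarrow> 0) (at 0)"
    using filterlim_at_split by blast
  then show ?thesis
    unfolding DERIV_def equal by (simp add: exp_recip_deriv_def)
next
  case greater
  let ?p = "exp_recip_poly k"
  have "((\<lambda>t. poly ?p (inverse t)) has_real_derivative
      poly (pderiv ?p) (inverse t) * (- inverse (t\<^sup>2))) (at t)"
    using DERIV_chain2[OF poly_DERIV DERIV_inverse[of t]] greater by (simp add: power2_eq_square)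
  moreover have "((\<lambda>t. exp (- inverse t)) has_real_derivative exp (- inverse t) * inverse (t\<^sup>2)) (at t)"
    using DERIV_chain2[OF DERIV_exp DERIV_minus[OF DERIV_inverse[of t]]] greater
    by (simp add: power2_eq_square)
  ultimately have "((\<lambda>t. poly ?p (inverse t) * exp (- inverse t)) has_real_derivative
      exp_recip_deriv (Suc k) t) (at t)"
    using DERIV_mult greater by (fastforce simp: exp_recip_deriv_def algebra_simps power2_eq_square)
  then show ?thesis
    by (rule has_field_derivative_transform_within_open[where S="{0<..}"])
      (use greater in \<open>auto simp: exp_recip_deriv_def\<close>)
qed

lemma closed_fsupp [simp]: "closed (fsupp f)"
  by (simp add: fsupp_def)

lemma in_fsupp: "f x \<noteq> 0 \<Longrightarrow> x \<in> fsupp f"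
  unfolding fsupp_def by (rule closure_subset[THEN subsetD]) simp

lemma not_in_fsupp: "x \<notin> fsupp f \<Longrightarrow> f x = 0"
  by (metis in_fsupp)

lemma fsupp_subset_closed: "closed C \<Longrightarrow> (\<And>x. f x \<noteq> 0 \<Longrightarrow> x \<in> C) \<Longrightarrow> fsupp f \<subseteq> C"
  unfolding fsupp_def by (rule closure_minimal) auto

lemma fsupp_mono: "(\<And>x. f x \<noteq> 0 \<Longrightarrow> g x \<noteq> 0) \<Longrightarrow> fsupp f \<subseteq> fsupp g"
  unfolding fsupp_def by (rule closure_mono) auto

lemma compact_fsupp_subset: "compact K \<Longrightarrow> fsupp f \<subseteq> K \<Longrightarrow> compact (fsupp f)"
  using compact_Int_closed[of K "fsupp f"] by (simp add: Int_absorb1)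

lemma fsupp_zero [simp]: "fsupp (\<lambda>x. 0) = {}"
  by (simp add: fsupp_def)

lemma fsupp_cnj [simp]: "fsupp (\<lambda>x. cnj (f x)) = fsupp f"
  by (simp add: fsupp_def)

lemma fsupp_cmult: "fsupp (\<lambda>x. c * f x) \<subseteq> fsupp f"
  by (rule fsupp_mono) simp

lemma fsupp_divide: "fsupp (\<lambda>x. f x / g x) \<subseteq> fsupp f"
  by (rule fsupp_mono) auto

lemma fsupp_sum:
  assumes "finite I"
  shows "fsupp (\<lambda>x. \<Sum>i\<in>I. f i x) \<subseteq> (\<Union>i\<in>I. fsupp (f i))"
proof (rule fsupp_subset_closed)
  show "closed (\<Union>i\<in>I. fsupp (f i))"
    using assms by (simp add: closed_UN)
  show "x \<in> (\<Union>i\<in>I. fsupp (f i))" if "(\<Sum>i\<in>I. f i x) \<noteq> 0" for x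
    using that sum.neutral[of I "\<lambda>i. f i x"] in_fsupp by blast
qed

lemma fsupp_add: "fsupp (\<lambda>x. f x + g x) \<subseteq> fsupp f \<union> fsupp g"
proof (rule fsupp_subset_closed)
  show "closed (fsupp f \<union> fsupp g)"
    by (simp add: closed_Un)
qed (metis UnCI add.left_neutral add.right_neutral in_fsupp)

lemma fsupp_diff: "fsupp (\<lambda>x. f x - g x) \<subseteq> fsupp f \<union> fsupp g"
proof (rule fsupp_subset_closed)
  show "closed (fsupp f \<union> fsupp g)"
    by (simp add: closed_Un)
qed (metis UnCI diff_zero diff_self in_fsupp)

section \<open>Smooth functions on a manifold\<close>

locale smooth_manifold =
  fixes A :: "('m::t2_space set \<times> ('m \<Rightarrow> 'e::euclidean_space)) set"
  assumes atlas: "smooth_atlas A"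
begin

lemma chart:
  assumes "(U, \<phi>) \<in> A"
  shows chart_open: "open U"
    and chart_homeomorphism: "homeomorphism U (\<phi> ` U) \<phi> (inv_into U \<phi>)"
proof -
  have "is_chart U \<phi>"
    using atlas assms unfolding smooth_atlas_def by blast
  then show "open U" "homeomorphism U (\<phi> ` U) \<phi> (inv_into U \<phi>)"
    unfolding is_chart_def by blast+
qed

lemma chart_inv_into: "(U, \<phi>) \<in> A \<Longrightarrow> x \<in> U \<Longrightarrow> inv_into U \<phi> (\<phi> x) = x"
  using chart_homeomorphism unfolding homeomorphism_def by auto

lemma open_chart_image:
  assumes "(U, \<phi>) \<in> A" "open W"
  shows "open (\<phi> ` (U \<inter> W))"
proof -
  have "openin (top_of_set U) (U \<inter> W)"
    using assms(2) by (simp add: openin_open_Int)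
  then have "openin (top_of_set (\<phi> ` U)) (\<phi> ` (U \<inter> W))"
    using homeomorphism_imp_open_map[OF chart_homeomorphism[OF assms(1)]] by blast
  moreover have "open (\<phi> ` U)"
    using atlas assms(1) unfolding smooth_atlas_def is_chart_def by blast
  ultimately show ?thesis
    using openin_open_eq by blast
qed

lemma chart_exists: "\<exists>U \<phi>. (U, \<phi>) \<in> A \<and> x \<in> U"
proof -
  have "x \<in> \<Union>(fst ` A)"
    using atlas unfolding smooth_atlas_def by simp
  then show ?thesis
    by force
qed

lemma smooth_chart_transition:
  assumes "(U, \<phi>) \<in> A" "(V, \<psi>) \<in> A"
  shows "smooth_on (\<phi> ` (U \<inter> V)) (\<psi> \<circ> inv_into U \<phi>)"
proof -
  have "\<forall>(U, \<phi>)\<in>A. \<forall>(V, \<psi>)\<in>A. smooth_on (\<phi> ` (U \<inter> V)) (\<psi> \<circ> inv_into U \<phi>)"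
    using atlas unfolding smooth_atlas_def by (elim conjE)
  with assms show ?thesis
    by fastforce
qed

text \<open>Unlike \<^const>\<open>smooth_fun\<close>, this allows any normed codomain, so that the charts themselves
  are smooth.\<close>

definition smooth_fun_on :: "'m set \<Rightarrow> ('m \<Rightarrow> 'b::real_normed_vector) \<Rightarrow> bool" where
  "smooth_fun_on W f \<longleftrightarrow> (\<forall>(U, \<phi>)\<in>A. \<forall>n. Ck_on n (\<phi> ` (U \<inter> W)) (\<lambda>y. f (inv_into U \<phi> y)))"

lemma smooth_fun_onI:
  "(\<And>U \<phi> n. (U, \<phi>) \<in> A \<Longrightarrow> Ck_on n (\<phi> ` (U \<inter> W)) (\<lambda>y. f (inv_into U \<phi> y))) \<Longrightarrow> smooth_fun_on W f"
  unfolding smooth_fun_on_def by blast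

lemma smooth_fun_onD:
  "smooth_fun_on W f \<Longrightarrow> (U, \<phi>) \<in> A \<Longrightarrow> Ck_on n (\<phi> ` (U \<inter> W)) (\<lambda>y. f (inv_into U \<phi> y))"
  unfolding smooth_fun_on_def by blast

lemma smooth_fun_iff_smooth_fun_on_UNIV: "smooth_fun A f \<longleftrightarrow> smooth_fun_on UNIV f"
proof -
  have "smooth_on (\<phi> ` U) (f \<circ> inv_into U \<phi>) \<longleftrightarrow> (\<forall>n. Ck_on n (\<phi> ` (U \<inter> UNIV)) (\<lambda>y. f (inv_into U \<phi> y)))"
    if "(U, \<phi>) \<in> A" for U \<phi>
    using smooth_on_iff_Ck_on[OF open_chart_image[OF that open_UNIV]] by (simp add: o_def)
  then show ?thesis
    unfolding smooth_fun_def smooth_fun_on_def by fast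
qed

lemma smooth_fun_on_subset:
  assumes "smooth_fun_on W f" "W' \<subseteq> W"
  shows "smooth_fun_on W' f"
  using assms(2) by (intro smooth_fun_onI Ck_on_subset[OF smooth_fun_onD[OF assms(1)]]) auto

lemma smooth_fun_on_Un:
  assumes "smooth_fun_on W f" "smooth_fun_on W' f"
  shows "smooth_fun_on (W \<union> W') f"
proof (rule smooth_fun_onI)
  fix U \<phi> n assume "(U, \<phi>) \<in> A"
  then have "Ck_on n (\<phi> ` (U \<inter> W) \<union> \<phi> ` (U \<inter> W')) (\<lambda>y. f (inv_into U \<phi> y))"
    using assms by (intro Ck_on_Un smooth_fun_onD)
  then show "Ck_on n (\<phi> ` (U \<inter> (W \<union> W'))) (\<lambda>y. f (inv_into U \<phi> y))"
    by (simp add: Int_Un_distrib image_Un)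
qed

lemma smooth_fun_on_cong:
  assumes "open W" "smooth_fun_on W f" "\<And>x. x \<in> W \<Longrightarrow> f x = g x"
  shows "smooth_fun_on W g"
proof (rule smooth_fun_onI)
  fix U \<phi> n assume chart: "(U, \<phi>) \<in> A"
  show "Ck_on n (\<phi> ` (U \<inter> W)) (\<lambda>y. g (inv_into U \<phi> y))"
  proof (rule Ck_on_cong[OF open_chart_image[OF chart assms(1)] smooth_fun_onD[OF assms(2) chart]])
    show "f (inv_into U \<phi> y) = g (inv_into U \<phi> y)" if "y \<in> \<phi> ` (U \<inter> W)" for y
      using that assms(3) chart_inv_into[OF chart] by auto
  qed
qed

lemma smooth_fun_on_const: "open W \<Longrightarrow> smooth_fun_on W (\<lambda>x. c)"
  by (intro smooth_fun_onI Ck_on_const open_chart_image)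

lemma smooth_fun_on_add:
  assumes "open W" "smooth_fun_on W f" "smooth_fun_on W g"
  shows "smooth_fun_on W (\<lambda>x. f x + g x)"
  by (intro smooth_fun_onI Ck_on_add open_chart_image[OF _ assms(1)]
      smooth_fun_onD[OF assms(2)] smooth_fun_onD[OF assms(3)])

lemma smooth_fun_on_linear:
  assumes "open W" "bounded_linear L" "smooth_fun_on W f"
  shows "smooth_fun_on W (\<lambda>x. L (f x))"
  by (intro smooth_fun_onI Ck_on_linear[OF _ assms(2)] open_chart_image[OF _ assms(1)]
      smooth_fun_onD[OF assms(3)])

lemma smooth_fun_on_bilinear:
  assumes "open W" "bounded_bilinear b" "smooth_fun_on W f" "smooth_fun_on W g"
  shows "smooth_fun_on W (\<lambda>x. b (f x) (g x))"
  by (intro smooth_fun_onI Ck_on_bilinear[OF _ assms(2)] open_chart_image[OF _ assms(1)]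
      smooth_fun_onD[OF assms(3)] smooth_fun_onD[OF assms(4)])

lemma smooth_fun_on_inverse:
  fixes f :: "'m \<Rightarrow> 'b::real_normed_div_algebra"
  assumes "open W" "smooth_fun_on W f" "\<And>x. x \<in> W \<Longrightarrow> f x \<noteq> 0"
  shows "smooth_fun_on W (\<lambda>x. inverse (f x))"
proof (rule smooth_fun_onI)
  fix U \<phi> n assume chart: "(U, \<phi>) \<in> A"
  show "Ck_on n (\<phi> ` (U \<inter> W)) (\<lambda>y. inverse (f (inv_into U \<phi> y)))"
    using assms(3) chart_inv_into[OF chart]
    by (intro Ck_on_inverse open_chart_image[OF chart assms(1)] smooth_fun_onD[OF assms(2) chart]) auto
qed

lemma smooth_fun_on_compose_real:
  assumes "open W" "smooth_fun_on W q" "\<And>k t. (g k has_real_derivative g (Suc k) t) (at t)"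
  shows "smooth_fun_on W (\<lambda>x. g k (q x))"
proof (rule smooth_fun_onI)
  fix U \<phi> n assume chart: "(U, \<phi>) \<in> A"
  show "Ck_on n (\<phi> ` (U \<inter> W)) (\<lambda>y. g k (q (inv_into U \<phi> y)))"
    by (rule Ck_on_compose_real[where g=g])
      (use open_chart_image[OF chart assms(1)] smooth_fun_onD[OF assms(2) chart] assms(3) in auto)
qed

lemma smooth_fun_on_chart:
  assumes "(U, \<phi>) \<in> A"
  shows "smooth_fun_on U \<phi>"
proof (rule smooth_fun_onI)
  fix V \<psi> n assume chart: "(V, \<psi>) \<in> A"
  show "Ck_on n (\<psi> ` (V \<inter> U)) (\<lambda>y. \<phi> (inv_into V \<psi> y))"
    using smooth_chart_transition[OF chart assms]
      smooth_on_iff_Ck_on[OF open_chart_image[OF chart chart_open[OF assms]]]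
    unfolding o_def by blast
qed

lemma smooth_fun_on_continuous_on:
  assumes "open W" "smooth_fun_on W f"
  shows "continuous_on W f"
proof -
  have "isCont f x" if "x \<in> W" for x
  proof -
    obtain U \<phi> where chart: "(U, \<phi>) \<in> A" and "x \<in> U"
      using chart_exists by blast
    have "continuous_on (\<phi> ` (U \<inter> W)) (\<lambda>y. f (inv_into U \<phi> y))"
      using smooth_fun_onD[OF assms(2) chart, of "Suc 0"]
      by (simp add: continuous_at_imp_continuous_on differentiable_imp_continuous_within)
    moreover have "continuous_on (U \<inter> W) \<phi>"
      using chart_homeomorphism[OF chart] continuous_on_subset[of U \<phi> "U \<inter> W"]
      unfolding homeomorphism_def by simp
    ultimately have "continuous_on (U \<inter> W) (\<lambda>x. f (inv_into U \<phi> (\<phi> x)))"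
      by (rule continuous_on_compose2) auto
    then have "continuous_on (U \<inter> W) f"
      by (rule continuous_on_cong[THEN iffD1, rotated 2]) (auto simp: chart_inv_into[OF chart])
    then show ?thesis
      using \<open>x \<in> U\<close> that assms(1) chart_open[OF chart]
      by (simp add: continuous_on_eq_continuous_at open_Int)
  qed
  then show ?thesis
    by (simp add: continuous_at_imp_continuous_on)
qed

lemma smooth_fun_on_diff:
  assumes "open W" "smooth_fun_on W f" "smooth_fun_on W g"
  shows "smooth_fun_on W (\<lambda>x. f x - g x)"
  using smooth_fun_on_add[OF assms(1,2)
      smooth_fun_on_linear[OF assms(1) bounded_linear_minus[OF bounded_linear_ident] assms(3)]]
  by simp

lemma smooth_fun_const: "smooth_fun A (\<lambda>x. c)"
  by (simp add: smooth_fun_iff_smooth_fun_on_UNIV smooth_fun_on_const)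

lemma smooth_fun_add: "smooth_fun A f \<Longrightarrow> smooth_fun A g \<Longrightarrow> smooth_fun A (\<lambda>x. f x + g x)"
  by (simp add: smooth_fun_iff_smooth_fun_on_UNIV smooth_fun_on_add)

lemma smooth_fun_diff: "smooth_fun A f \<Longrightarrow> smooth_fun A g \<Longrightarrow> smooth_fun A (\<lambda>x. f x - g x)"
  by (simp add: smooth_fun_iff_smooth_fun_on_UNIV smooth_fun_on_diff)

lemma smooth_fun_mult: "smooth_fun A f \<Longrightarrow> smooth_fun A g \<Longrightarrow> smooth_fun A (\<lambda>x. f x * g x)"
  by (simp add: smooth_fun_iff_smooth_fun_on_UNIV smooth_fun_on_bilinear[OF _ bounded_bilinear_mult])

lemma smooth_fun_cnj: "smooth_fun A f \<Longrightarrow> smooth_fun A (\<lambda>x. cnj (f x))"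
  by (simp add: smooth_fun_iff_smooth_fun_on_UNIV smooth_fun_on_linear[OF _ bounded_linear_cnj])

lemma smooth_fun_sum: "(\<And>i. i \<in> I \<Longrightarrow> smooth_fun A (f i)) \<Longrightarrow> smooth_fun A (\<lambda>x. \<Sum>i\<in>I. f i x)"
  by (induction I rule: infinite_finite_induct) (simp_all add: smooth_fun_const smooth_fun_add)

lemma smooth_fun_continuous_on: "smooth_fun A f \<Longrightarrow> continuous_on UNIV f"
  by (simp add: smooth_fun_iff_smooth_fun_on_UNIV smooth_fun_on_continuous_on)

lemma smooth_fun_extend_zero:
  assumes "open U" "smooth_fun_on U f" "closed C" "C \<subseteq> U" "\<And>x. x \<notin> C \<Longrightarrow> f x = 0"
  shows "smooth_fun A f"
proof -
  have open_C: "open (- C)"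
    using assms(3) by (simp add: open_Compl)
  have "smooth_fun_on (- C) f"
    by (rule smooth_fun_on_cong[OF open_C smooth_fun_on_const[OF open_C]]) (use assms(5) in auto)
  with assms(2) have "smooth_fun_on (U \<union> - C) f"
    by (rule smooth_fun_on_Un)
  moreover have "U \<union> - C = UNIV"
    using assms(4) by blast
  ultimately show ?thesis
    by (simp add: smooth_fun_iff_smooth_fun_on_UNIV)
qed

text \<open>The junk value \<open>f x / 0 = 0\<close> makes the quotient vanish, like \<open>f\<close>, off \<open>fsupp f\<close>.\<close>

lemma smooth_fun_divide:
  assumes f: "smooth_fun A f" and g: "smooth_fun A g" and supp: "fsupp f \<subseteq> {x. g x \<noteq> 0}"
  shows "smooth_fun A (\<lambda>x. f x / g x)"
proof (rule smooth_fun_extend_zero[OF _ _ closed_fsupp supp])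
  let ?N = "{x. g x \<noteq> 0}"
  show N: "open ?N"
    using smooth_fun_continuous_on[OF g] by (simp add: open_Collect_neq continuous_on_const)
  have "smooth_fun_on ?N f" "smooth_fun_on ?N g"
    using f g smooth_fun_on_subset by (auto simp: smooth_fun_iff_smooth_fun_on_UNIV)
  then have "smooth_fun_on ?N (\<lambda>x. f x * inverse (g x))"
    by (intro smooth_fun_on_bilinear[OF N bounded_bilinear_mult] smooth_fun_on_inverse[OF N]) auto
  then show "smooth_fun_on ?N (\<lambda>x. f x / g x)"
    by (simp add: divide_inverse)
qed (simp add: not_in_fsupp)

lemma chart_preimage_subset:
  assumes "(U, \<phi>) \<in> A" "S \<subseteq> U" "B \<subseteq> \<phi> ` S"
  shows "inv_into U \<phi> ` B \<subseteq> S"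
proof
  fix x assume "x \<in> inv_into U \<phi> ` B"
  then obtain x' where "x' \<in> S" "x = inv_into U \<phi> (\<phi> x')"
    using assms(3) by blast
  then show "x \<in> S"
    using chart_inv_into[OF assms(1)] assms(2) by auto
qed

lemma compact_chart_preimage:
  assumes "(U, \<phi>) \<in> A" "compact B" "B \<subseteq> \<phi> ` U"
  shows "compact (inv_into U \<phi> ` B)"
proof -
  have "continuous_on (\<phi> ` U) (inv_into U \<phi>)"
    using chart_homeomorphism[OF assms(1)] by (simp add: homeomorphism_def)
  then have "continuous_on B (inv_into U \<phi>)"
    using assms(3) by (rule continuous_on_subset)
  then show ?thesis
    using assms(2) by (rule compact_continuous_image)
qed

lemma smooth_fun_on_chart_bump:
  assumes chart: "(U, \<phi>) \<in> A"
  shows "smooth_fun_on U (\<lambda>x. complex_of_real (exp_recip_deriv 0 (r\<^sup>2 - inner (\<phi> x - c) (\<phi> x - c))))"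
proof -
  have U: "open U"
    by (rule chart_open[OF chart])
  have shifted: "smooth_fun_on U (\<lambda>x. \<phi> x - c)"
    by (rule smooth_fun_on_diff[OF U smooth_fun_on_chart[OF chart] smooth_fun_on_const[OF U]])
  have q: "smooth_fun_on U (\<lambda>x. r\<^sup>2 - inner (\<phi> x - c) (\<phi> x - c))"
    by (rule smooth_fun_on_diff[OF U smooth_fun_on_const[OF U]
          smooth_fun_on_bilinear[OF U bounded_bilinear_inner shifted shifted]])
  show ?thesis
    by (rule smooth_fun_on_linear[OF U bounded_linear_of_real
          smooth_fun_on_compose_real[OF U q, of exp_recip_deriv, OF exp_recip_deriv_has_derivative]])
qed

lemma smooth_bump_exists:
  assumes "open W" "p \<in> W"
  obtains f where "smooth_fun A f" "compact (fsupp f)" "fsupp f \<subseteq> W" "f p \<noteq> 0"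
proof -
  obtain U \<phi> where chart: "(U, \<phi>) \<in> A" and "p \<in> U"
    using chart_exists by blast
  have U: "open U"
    by (rule chart_open[OF chart])
  let ?c = "\<phi> p"
  have "?c \<in> \<phi> ` (U \<inter> W)"
    using \<open>p \<in> U\<close> assms(2) by blast
  then obtain r where "r > 0" and ball: "cball ?c r \<subseteq> \<phi> ` (U \<inter> W)"
    using open_contains_cball[THEN iffD1, OF open_chart_image[OF chart assms(1)]] by blast
  define K where "K = inv_into U \<phi> ` cball ?c r"
  have K_sub: "K \<subseteq> U \<inter> W"
    unfolding K_def by (rule chart_preimage_subset[OF chart _ ball]) simp
  have K: "compact K"
    unfolding K_def using chart compact_cball by (rule compact_chart_preimage) (use ball in auto)
  define q where "q x = r\<^sup>2 - inner (\<phi> x - ?c) (\<phi> x - ?c)" for x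
  define f where "f x = (if x \<in> U then complex_of_real (exp_recip_deriv 0 (q x)) else 0)" for x
  have f_K: "x \<in> K" if "f x \<noteq> 0" for x
  proof -
    from that have "x \<in> U" and "q x > 0"
      by (auto simp: f_def exp_recip_deriv_def split: if_splits)
    then have "(norm (\<phi> x - ?c))\<^sup>2 < r\<^sup>2"
      by (simp add: q_def power2_norm_eq_inner)
    then have "dist ?c (\<phi> x) \<le> r"
      using \<open>r > 0\<close> by (simp add: dist_norm norm_minus_commute power_less_imp_less_base less_imp_le)
    then have "inv_into U \<phi> (\<phi> x) \<in> K"
      unfolding K_def by simp
    then show "x \<in> K"
      using chart_inv_into[OF chart \<open>x \<in> U\<close>] by simp
  qed
  have "smooth_fun_on U (\<lambda>x. complex_of_real (exp_recip_deriv 0 (q x)))"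
    unfolding q_def by (rule smooth_fun_on_chart_bump[OF chart])
  then have "smooth_fun_on U f"
    by (rule smooth_fun_on_cong[OF U]) (simp add: f_def)
  then have "smooth_fun A f"
    by (rule smooth_fun_extend_zero[OF U _ compact_imp_closed[OF K]]) (use K_sub f_K in auto)
  moreover have "fsupp f \<subseteq> K"
    using f_K by (intro fsupp_subset_closed compact_imp_closed K)
  moreover have "f p \<noteq> 0"
    using \<open>p \<in> U\<close> \<open>r > 0\<close> by (simp add: f_def q_def exp_recip_deriv_def)
  ultimately show ?thesis
    using that compact_fsupp_subset[OF K] K_sub by blast
qed

lemma C0_seriesI:
  "(\<And>n. smooth_fun A (F n)) \<Longrightarrow> (\<And>n. compact (fsupp (F n))) \<Longrightarrow> (\<And>n. fsupp (F n) \<subseteq> W) \<Longrightarrow>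
    F \<in> C0_series A W"
  unfolding C0_series_def by blast

lemma C0_seriesD:
  assumes "F \<in> C0_series A W"
  shows C0_series_smooth: "smooth_fun A (F n)"
    and C0_series_compact: "compact (fsupp (F n))"
    and C0_series_fsupp: "fsupp (F n) \<subseteq> W"
  using assms unfolding C0_series_def by blast+

lemma C0_series_mono: "F \<in> C0_series A W \<Longrightarrow> W \<subseteq> W' \<Longrightarrow> F \<in> C0_series A W'"
  unfolding C0_series_def by blast

lemma zero_in_C0_series: "(\<lambda>n x. 0) \<in> C0_series A W"
  by (rule C0_seriesI) (simp_all add: smooth_fun_const)

lemma C0_series_add:
  assumes "F \<in> C0_series A W" "G \<in> C0_series A W"
  shows "(\<lambda>n x. F n x + G n x) \<in> C0_series A W"
proof (rule C0_seriesI)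
  fix n
  show "smooth_fun A (\<lambda>x. F n x + G n x)"
    using assms by (intro smooth_fun_add C0_series_smooth)
  have "fsupp (\<lambda>x. F n x + G n x) \<subseteq> fsupp (F n) \<union> fsupp (G n)"
    by (rule fsupp_add)
  then show "compact (fsupp (\<lambda>x. F n x + G n x))" "fsupp (\<lambda>x. F n x + G n x) \<subseteq> W"
    using assms C0_series_fsupp
      compact_fsupp_subset[OF compact_Un[OF C0_series_compact C0_series_compact]]
    by blast+
qed

lemma C0_series_cnj: "F \<in> C0_series A W \<Longrightarrow> series_cnj F \<in> C0_series A W"
  unfolding series_cnj_def
  by (rule C0_seriesI) (simp_all add: smooth_fun_cnj C0_series_smooth C0_series_compact C0_series_fsupp)

end

definition shift_series :: "nat \<Rightarrow> complex \<Rightarrow> (nat \<Rightarrow> 'm \<Rightarrow> complex) \<Rightarrow> (nat \<Rightarrow> 'm \<Rightarrow> complex)" where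
  "shift_series N z F = (\<lambda>n x. if N \<le> n then z * F (n - N) x else 0)"

definition shift_fps :: "nat \<Rightarrow> complex \<Rightarrow> (nat \<Rightarrow> complex) \<Rightarrow> (nat \<Rightarrow> complex)" where
  "shift_fps N z a = (\<lambda>n. if N \<le> n then z * a (n - N) else 0)"

definition fps_monom :: "nat \<Rightarrow> complex \<Rightarrow> nat \<Rightarrow> complex" where
  "fps_monom N z = (\<lambda>n. if n = N then z else 0)"

lemma fps_smult_monom: "fps_smult (fps_monom N z) F = shift_series N z F"
  unfolding fps_smult_def fps_monom_def shift_series_def
  by (simp add: if_distrib[of "\<lambda>c. c * _"] cong: if_cong)

lemma fps_cmult_monom: "fps_cmult (fps_monom N z) a = shift_fps N z a"
  unfolding fps_cmult_def fps_monom_def shift_fps_def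
  by (simp add: if_distrib[of "\<lambda>c. c * _"] cong: if_cong)

lemma shift_fps_eq_0_iff: "shift_fps N z a = (\<lambda>n. 0) \<longleftrightarrow> z = 0 \<or> a = (\<lambda>n. 0)"
proof
  assume "shift_fps N z a = (\<lambda>n. 0)"
  then have "z * a n = 0" for n
    by (metis (mono_tags) add_diff_cancel_right' le_add2 shift_fps_def)
  then show "z = 0 \<or> a = (\<lambda>n. 0)"
    by auto
qed (auto simp: shift_fps_def)

lemma (in smooth_manifold) C0_series_shift:
  assumes "F \<in> C0_series A W"
  shows "shift_series N z F \<in> C0_series A W"
proof (rule C0_seriesI)
  fix n
  show "smooth_fun A (shift_series N z F n)"
    using assms
    by (cases "N \<le> n") (simp_all add: shift_series_def smooth_fun_mult smooth_fun_const C0_series_smooth)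
  have "fsupp (shift_series N z F n) \<subseteq> fsupp (F (n - N))"
    unfolding shift_series_def using fsupp_cmult by (cases "N \<le> n") simp_all
  then show "compact (fsupp (shift_series N z F n))" "fsupp (shift_series N z F n) \<subseteq> W"
    using assms C0_series_fsupp compact_fsupp_subset[OF C0_series_compact] by blast+
qed

section \<open>The star product of series\<close>

lemma sum_atMost_shift_right:
  fixes n N :: nat
  shows "(\<Sum>s\<le>n. if N \<le> n - s then f s (n - s - N) else 0) =
    (if N \<le> n then \<Sum>s\<le>n - N. f s (n - N - s) else 0)"
proof (cases "N \<le> n")
  case True
  have "(\<Sum>s\<le>n. if N \<le> n - s then f s (n - s - N) else 0) = (\<Sum>s\<le>n - N. f s (n - N - s))"
    by (rule sum.mono_neutral_cong_right) (use True in \<open>auto simp: le_diff_conv2 add.commute\<close>)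
  with True show ?thesis
    by simp
next
  case False
  then have "\<not> N \<le> n - s" for s
    by linarith
  with False show ?thesis
    by simp
qed

lemma sum_atMost_shift_left:
  fixes n N :: nat
  shows "(\<Sum>s\<le>n. if N \<le> s then f (s - N) (n - s) else 0) =
    (if N \<le> n then \<Sum>s\<le>n - N. f s (n - N - s) else 0)"
proof (cases "N \<le> n")
  case True
  have "(\<Sum>s\<le>n. if N \<le> s then f (s - N) (n - s) else 0) = (\<Sum>s\<in>{N..n}. f (s - N) (n - s))"
    by (rule sum.mono_neutral_cong_right) auto
  also have "\<dots> = (\<Sum>s\<le>n - N. f s (n - N - s))"
    by (rule sum.reindex_bij_witness[where i="\<lambda>s. s + N" and j="\<lambda>s. s - N"])
      (use True in \<open>auto simp: le_diff_conv2\<close>)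
  finally show ?thesis
    using True by simp
qed simp

locale star_manifold = smooth_manifold A
  for A :: "('m::t2_space set \<times> ('m \<Rightarrow> 'e::euclidean_space)) set" +
  fixes pb :: "('m \<Rightarrow> complex) \<Rightarrow> ('m \<Rightarrow> complex) \<Rightarrow> ('m \<Rightarrow> complex)"
    and Mr :: "nat \<Rightarrow> ('m \<Rightarrow> complex) \<Rightarrow> ('m \<Rightarrow> complex) \<Rightarrow> ('m \<Rightarrow> complex)"
  assumes star_product: "local_star_product A pb Mr"
begin

lemma local_star_productD:
  assumes "smooth_fun A f" "smooth_fun A g" "smooth_fun A h"
  shows "smooth_fun A (Mr r f g) \<and>
    Mr r (\<lambda>x. f x + g x) h = (\<lambda>x. Mr r f h x + Mr r g h x) \<and>
    Mr r h (\<lambda>x. f x + g x) = (\<lambda>x. Mr r h f x + Mr r h g x) \<and>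
    Mr r (\<lambda>x. c * f x) g = (\<lambda>x. c * Mr r f g x) \<and>
    Mr r g (\<lambda>x. c * f x) = (\<lambda>x. c * Mr r g f x) \<and>
    (\<forall>U. open U \<and> (\<forall>x\<in>U. f x = 0) \<longrightarrow> (\<forall>x\<in>U. Mr r f g x = 0 \<and> Mr r g f x = 0)) \<and>
    Mr 0 f g = (\<lambda>x. f x * g x)"
proof -
  note axioms = conjunct1[OF star_product[unfolded local_star_product_def], rule_format]
    conjunct2[OF star_product[unfolded local_star_product_def], rule_format]
  show ?thesis
    using axioms(1)[OF conjI[OF assms(1) conjI[OF assms(2,3)]], of r c] axioms(2)[OF conjI[OF assms(1,2)]]
    by (elim conjE) (intro conjI)
qed

lemma
  assumes "smooth_fun A f" "smooth_fun A g"
  shows smooth_fun_Mr: "smooth_fun A (Mr r f g)"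
    and Mr_cmult_left: "Mr r (\<lambda>x. c * f x) g = (\<lambda>x. c * Mr r f g x)"
    and Mr_cmult_right: "Mr r g (\<lambda>x. c * f x) = (\<lambda>x. c * Mr r g f x)"
    and Mr_0: "Mr 0 f g = (\<lambda>x. f x * g x)"
  using local_star_productD[OF assms assms(2)] by blast+

lemma
  assumes "smooth_fun A f" "smooth_fun A g" "smooth_fun A h"
  shows Mr_add_left: "Mr r (\<lambda>x. f x + g x) h = (\<lambda>x. Mr r f h x + Mr r g h x)"
    and Mr_add_right: "Mr r h (\<lambda>x. f x + g x) = (\<lambda>x. Mr r h f x + Mr r h g x)"
  using local_star_productD[OF assms] by blast+

lemma fsupp_Mr_subset: "smooth_fun A f \<Longrightarrow> smooth_fun A g \<Longrightarrow> fsupp (Mr r f g) \<subseteq> fsupp f"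
proof (rule fsupp_subset_closed[OF closed_fsupp], rule ccontr)
  fix x assume smooth: "smooth_fun A f" "smooth_fun A g" and "Mr r f g x \<noteq> 0" "x \<notin> fsupp f"
  moreover have "open (- fsupp f)" "\<forall>y\<in>- fsupp f. f y = 0"
    by (auto simp: open_Compl not_in_fsupp)
  ultimately show False
    using local_star_productD[OF smooth smooth(2), of r] by blast
qed

lemma Mr_zero_left: "smooth_fun A g \<Longrightarrow> Mr r (\<lambda>x. 0) g = (\<lambda>x. 0)"
  using Mr_cmult_left[OF smooth_fun_const, of g r 0 0] by simp

lemma Mr_zero_right: "smooth_fun A g \<Longrightarrow> Mr r g (\<lambda>x. 0) = (\<lambda>x. 0)"
  using Mr_cmult_right[OF smooth_fun_const, of g r 0 0] by simp

lemma star_add_left: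
  assumes "\<And>n. smooth_fun A (F n)" "\<And>n. smooth_fun A (G n)" "\<And>n. smooth_fun A (H n)"
  shows "star Mr (\<lambda>n x. F n x + G n x) H = (\<lambda>n x. star Mr F H n x + star Mr G H n x)"
  unfolding star_def using Mr_add_left[OF assms] by (simp add: sum.distrib)

lemma star_add_right:
  assumes "\<And>n. smooth_fun A (F n)" "\<And>n. smooth_fun A (G n)" "\<And>n. smooth_fun A (H n)"
  shows "star Mr H (\<lambda>n x. F n x + G n x) = (\<lambda>n x. star Mr H F n x + star Mr H G n x)"
  unfolding star_def using Mr_add_right[OF assms] by (simp add: sum.distrib)

lemma star_shift_right:
  assumes "\<And>n. smooth_fun A (F n)" "\<And>n. smooth_fun A (G n)"
  shows "star Mr F (shift_series N z G) = shift_series N z (star Mr F G)"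
proof (intro ext)
  fix n x
  have "Mr r (F s) (shift_series N z G t) x = (if N \<le> t then z * Mr r (F s) (G (t - N)) x else 0)"
    for r s t
    using Mr_cmult_right[OF assms(2) assms(1)] Mr_zero_right[OF assms(1)] by (simp add: shift_series_def)
  then have "star Mr F (shift_series N z G) n x =
      (\<Sum>r\<le>n. \<Sum>s\<le>n - r. if N \<le> n - r - s then z * Mr r (F s) (G (n - r - s - N)) x else 0)"
    by (simp only: star_def)
  also have "\<dots> = (\<Sum>r\<le>n. if N \<le> n - r then \<Sum>s\<le>n - r - N. z * Mr r (F s) (G (n - r - N - s)) x else 0)"
    by (intro sum.cong refl sum_atMost_shift_right)
  also have "\<dots> = (if N \<le> n then \<Sum>r\<le>n - N. \<Sum>s\<le>n - N - r. z * Mr r (F s) (G (n - N - r - s)) x else 0)"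
    by (rule sum_atMost_shift_right)
  also have "\<dots> = shift_series N z (star Mr F G) n x"
    by (simp add: star_def shift_series_def sum_distrib_left add.assoc)
  finally show "star Mr F (shift_series N z G) n x = shift_series N z (star Mr F G) n x" .
qed

lemma star_shift_left:
  assumes "\<And>n. smooth_fun A (F n)" "\<And>n. smooth_fun A (G n)"
  shows "star Mr (shift_series N z F) G = shift_series N z (star Mr F G)"
proof (intro ext)
  fix n x
  have "Mr r (shift_series N z F s) (G t) x = (if N \<le> s then z * Mr r (F (s - N)) (G t) x else 0)"
    for r s t
    using Mr_cmult_left[OF assms] Mr_zero_left[OF assms(2)] by (simp add: shift_series_def)
  then have "star Mr (shift_series N z F) G n x =
      (\<Sum>r\<le>n. \<Sum>s\<le>n - r. if N \<le> s then z * Mr r (F (s - N)) (G (n - r - s)) x else 0)"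
    by (simp only: star_def)
  also have "\<dots> = (\<Sum>r\<le>n. if N \<le> n - r then \<Sum>s\<le>n - r - N. z * Mr r (F s) (G (n - r - N - s)) x else 0)"
    by (intro sum.cong refl sum_atMost_shift_left)
  also have "\<dots> = (if N \<le> n then \<Sum>r\<le>n - N. \<Sum>s\<le>n - N - r. z * Mr r (F s) (G (n - N - r - s)) x else 0)"
    by (rule sum_atMost_shift_right)
  also have "\<dots> = shift_series N z (star Mr F G) n x"
    by (simp add: star_def shift_series_def sum_distrib_left add.assoc)
  finally show "star Mr (shift_series N z F) G n x = shift_series N z (star Mr F G) n x" .
qed

lemma star_zero_left: "(\<And>n. smooth_fun A (G n)) \<Longrightarrow> star Mr (\<lambda>n x. 0) G = (\<lambda>n x. 0)"
  unfolding star_def by (simp add: Mr_zero_left)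

lemma C0_series_star:
  assumes F: "F \<in> C0_series A W" and G: "\<And>n. smooth_fun A (G n)"
  shows "star Mr F G \<in> C0_series A W"
proof (rule C0_seriesI)
  fix n
  have Mr: "smooth_fun A (Mr r (F s) (G t))" "fsupp (Mr r (F s) (G t)) \<subseteq> fsupp (F s)" for r s t
    using F G by (simp_all add: smooth_fun_Mr fsupp_Mr_subset C0_series_smooth)
  then show "smooth_fun A (star Mr F G n)"
    unfolding star_def by (intro smooth_fun_sum)
  have "fsupp (star Mr F G n) \<subseteq> (\<Union>r\<le>n. fsupp (\<lambda>x. \<Sum>s\<le>n - r. Mr r (F s) (G (n - r - s)) x))"
    unfolding star_def by (rule fsupp_sum) simp
  also have "\<dots> \<subseteq> (\<Union>r\<le>n. \<Union>s\<le>n - r. fsupp (Mr r (F s) (G (n - r - s))))"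
    by (intro UN_mono order.refl fsupp_sum) simp
  also have "\<dots> \<subseteq> (\<Union>s\<le>n. fsupp (F s))"
  proof (intro UN_least)
    fix r s assume "r \<in> {..n}" "s \<in> {..n - r}"
    then have "fsupp (F s) \<subseteq> (\<Union>s\<le>n. fsupp (F s))"
      by (intro UN_upper) simp
    then show "fsupp (Mr r (F s) (G (n - r - s))) \<subseteq> (\<Union>s\<le>n. fsupp (F s))"
      using Mr(2)[of r s "n - r - s"] by (rule subset_trans[rotated])
  qed
  finally have supp: "fsupp (star Mr F G n) \<subseteq> (\<Union>s\<le>n. fsupp (F s))" .
  moreover have "compact (\<Union>s\<le>n. fsupp (F s))"
    using F by (simp add: compact_UN C0_series_compact)
  ultimately show "compact (fsupp (star Mr F G n))"
    by (rule compact_fsupp_subset[rotated])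
  show "fsupp (star Mr F G n) \<subseteq> W"
    using supp C0_series_fsupp[OF F] by blast
qed


definition star_coeff_below ::
  "(nat \<Rightarrow> 'm \<Rightarrow> complex) \<Rightarrow> (nat \<Rightarrow> 'm \<Rightarrow> complex) \<Rightarrow> nat \<Rightarrow> nat \<Rightarrow> 'm \<Rightarrow> complex" where
  "star_coeff_below K F k m x =
     (\<Sum>r\<le>m + k. \<Sum>s\<in>{..m + k - r} \<inter> {..<m}. Mr r (K s) (F (m + k - r - s)) x)"

lemma
  assumes K: "\<And>s. smooth_fun A (K s)" and F: "\<And>j. smooth_fun A (F j)"
    and low: "\<And>j. j < k \<Longrightarrow> F j = (\<lambda>x. 0)"
  shows star_coeff_below_order: "n < k \<Longrightarrow> star Mr K F n x = 0"
    and star_coeff_split: "star Mr K F (m + k) x = star_coeff_below K F k m x + K m x * F k x"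
proof -
  have zero: "Mr r (K s) (F j) x = 0" if "j < k" for r s j
    using low[OF that] Mr_zero_right[OF K] by simp
  show "n < k \<Longrightarrow> star Mr K F n x = 0"
    unfolding star_def by (simp add: zero)
  let ?T = "\<lambda>r s. Mr r (K s) (F (m + k - r - s)) x"
  have top: "(\<Sum>s\<in>{..m + k - r} - {..<m}. ?T r s) = (if r = 0 then K m x * F k x else 0)"
    if "r \<le> m + k" for r
  proof -
    have "?T r s = (if s = m \<and> r = 0 then K m x * F k x else 0)" if "s \<in> {..m + k - r} - {..<m}" for s
    proof (cases "s = m \<and> r = 0")
      case False
      with that \<open>r \<le> m + k\<close> have "m + k - r - s < k"
        by auto
      from zero[OF this] False show ?thesis
        by (simp only: if_False)
    qed (simp add: Mr_0[OF K F])
    then have "(\<Sum>s\<in>{..m + k - r} - {..<m}. ?T r s) =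
        (\<Sum>s\<in>{..m + k - r} - {..<m}. if s = m \<and> r = 0 then K m x * F k x else 0)"
      by (rule sum.cong[OF refl])
    also have "\<dots> = (if r = 0 then K m x * F k x else 0)"
      by (cases "r = 0") simp_all
    finally show ?thesis .
  qed
  have "star Mr K F (m + k) x = (\<Sum>r\<le>m + k. (\<Sum>s\<in>{..m + k - r} \<inter> {..<m}. ?T r s) +
      (\<Sum>s\<in>{..m + k - r} - {..<m}. ?T r s))"
    unfolding star_def by (intro sum.cong refl sum.Int_Diff) simp
  also have "\<dots> = (\<Sum>r\<le>m + k. (\<Sum>s\<in>{..m + k - r} \<inter> {..<m}. ?T r s) +
      (if r = 0 then K m x * F k x else 0))"
    by (rule sum.cong[OF refl]) (subst top; simp)
  also have "\<dots> = star_coeff_below K F k m x + K m x * F k x"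
    by (simp add: sum.distrib star_coeff_below_def)
  finally show "star Mr K F (m + k) x = star_coeff_below K F k m x + K m x * F k x" .
qed

lemma star_coeff_below_remainder:
  assumes K: "\<And>s. s < m \<Longrightarrow> smooth_fun A (K s)" "\<And>s. s < m \<Longrightarrow> fsupp (K s) \<subseteq> C"
    and F: "\<And>j. smooth_fun A (F j)" and g: "smooth_fun A g" "fsupp g \<subseteq> C"
  shows "smooth_fun A (\<lambda>x. g x - star_coeff_below K F k m x)"
    and "fsupp (\<lambda>x. g x - star_coeff_below K F k m x) \<subseteq> C"
proof -
  have Mr: "smooth_fun A (Mr r (K s) (F j))" "fsupp (Mr r (K s) (F j)) \<subseteq> C" if "s < m" for r s j
    using smooth_fun_Mr[OF K(1)[OF that] F]
      subset_trans[OF fsupp_Mr_subset[OF K(1)[OF that] F] K(2)[OF that]]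
    by simp_all
  then have "smooth_fun A (star_coeff_below K F k m)"
    unfolding star_coeff_below_def by (intro smooth_fun_sum) auto
  then show "smooth_fun A (\<lambda>x. g x - star_coeff_below K F k m x)"
    by (rule smooth_fun_diff[OF g(1)])
  have "fsupp (star_coeff_below K F k m) \<subseteq>
      (\<Union>r\<le>m + k. fsupp (\<lambda>x. \<Sum>s\<in>{..m + k - r} \<inter> {..<m}. Mr r (K s) (F (m + k - r - s)) x))"
    unfolding star_coeff_below_def by (rule fsupp_sum) simp
  also have "\<dots> \<subseteq> C"
  proof (intro UN_least)
    fix r
    have "fsupp (\<lambda>x. \<Sum>s\<in>{..m + k - r} \<inter> {..<m}. Mr r (K s) (F (m + k - r - s)) x) \<subseteq>
        (\<Union>s\<in>{..m + k - r} \<inter> {..<m}. fsupp (Mr r (K s) (F (m + k - r - s))))"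
      by (rule fsupp_sum) simp
    also have "\<dots> \<subseteq> C"
      using Mr(2) by (intro UN_least) simp
    finally show "fsupp (\<lambda>x. \<Sum>s\<in>{..m + k - r} \<inter> {..<m}. Mr r (K s) (F (m + k - r - s)) x) \<subseteq> C" .
  qed
  finally show "fsupp (\<lambda>x. g x - star_coeff_below K F k m x) \<subseteq> C"
    using fsupp_diff[of g] g(2) by blast
qed

text \<open>If \<open>F\<^sub>k\<close> is the lowest coefficient of \<open>F\<close>, the coefficient of \<open>\<lambda>\<^bsup>m+k\<^esup>\<close> in \<open>K * F\<close> is
  \<open>K\<^sub>m F\<^sub>k\<close> plus \<open>star_coeff_below K F k m\<close>, which involves only \<open>K\<^sub>0, \<dots>, K\<^sub>m\<^sub>-\<^sub>1\<close>; solving for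
  \<open>K\<^sub>m\<close> gives the recursion.\<close>

definition star_quotient ::
  "(nat \<Rightarrow> 'm \<Rightarrow> complex) \<Rightarrow> nat \<Rightarrow> (nat \<Rightarrow> 'm \<Rightarrow> complex) \<Rightarrow> nat \<Rightarrow> 'm \<Rightarrow> complex" where
  "star_quotient F k h = wfrec less_than (\<lambda>K m x. (h m x - star_coeff_below K F k m x) / F k x)"

lemma star_quotient_eq:
  "star_quotient F k h m x = (h m x - star_coeff_below (star_quotient F k h) F k m x) / F k x"
proof -
  have "adm_wf less_than (\<lambda>K m x. (h m x - star_coeff_below K F k m x) / F k x)"
    unfolding adm_wf_def star_coeff_below_def by (auto intro!: ext sum.cong)
  then show ?thesis
    unfolding star_quotient_def by (subst wfrec_fixpoint) simp_all
qed

text \<open>All supports stay inside \<open>fsupp h\<^sub>0 \<union> \<dots> \<union> fsupp h\<^sub>m\<close>, a compact subset of \<open>{F\<^sub>k \<noteq> 0}\<close>;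
  this is what keeps every quotient smooth.\<close>

lemma star_quotient_coeff:
  assumes F: "\<And>j. smooth_fun A (F j)" and h: "h \<in> C0_series A {x. F k x \<noteq> 0}"
  defines "K \<equiv> star_quotient F k h"
  shows "smooth_fun A (K m)" and "fsupp (K m) \<subseteq> (\<Union>j\<le>m. fsupp (h j))"
    and "K m x * F k x = h m x - star_coeff_below K F k m x"
proof -
  define L where "L m = (\<Union>j\<le>m. fsupp (h j))" for m
  have L_nonzero: "L m \<subseteq> {x. F k x \<noteq> 0}" for m
    using h unfolding L_def by (auto dest: C0_series_fsupp)
  have L_mono: "L s \<subseteq> L m" if "s \<le> m" for s m
    unfolding L_def using that by (intro UN_mono) auto
  define R where "R m x = h m x - star_coeff_below K F k m x" for m x
  have R: "smooth_fun A (R m)" "fsupp (R m) \<subseteq> L m"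
    if IH: "\<And>s. s < m \<Longrightarrow> smooth_fun A (K s) \<and> fsupp (K s) \<subseteq> L s" for m
  proof -
    have "fsupp (K s) \<subseteq> L m" if "s < m" for s
      using IH[OF that] L_mono[of s m] that by auto
    moreover have "fsupp (h m) \<subseteq> L m"
      unfolding L_def by auto
    ultimately show "smooth_fun A (R m)" "fsupp (R m) \<subseteq> L m"
      unfolding R_def using IH F C0_series_smooth[OF h]
      by (intro star_coeff_below_remainder; blast)+
  qed
  have K_eq: "K m = (\<lambda>x. R m x / F k x)" for m
    unfolding K_def R_def by (rule ext) (rule star_quotient_eq)
  have K: "smooth_fun A (K m) \<and> fsupp (K m) \<subseteq> L m" for m
  proof (induction m rule: less_induct)
    case (less m)
    have R_m: "smooth_fun A (R m)" "fsupp (R m) \<subseteq> L m"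
      using R[of m] less by blast+
    have "smooth_fun A (\<lambda>x. R m x / F k x)"
      using R_m(2) L_nonzero by (intro smooth_fun_divide[OF R_m(1) F]) blast
    moreover have "fsupp (\<lambda>x. R m x / F k x) \<subseteq> L m"
      using fsupp_divide R_m(2) by (rule subset_trans)
    ultimately show ?case
      unfolding K_eq by simp
  qed
  then show "smooth_fun A (K m)" "fsupp (K m) \<subseteq> (\<Union>j\<le>m. fsupp (h j))"
    by (simp_all add: L_def)
  have "K m x * F k x = R m x"
  proof (cases "F k x = 0")
    case True
    have "fsupp (R m) \<subseteq> L m"
      by (rule R(2)) (rule K)
    moreover have "x \<notin> L m"
      using True L_nonzero by blast
    ultimately have "R m x = 0"
      by (meson not_in_fsupp subsetD)
    with True show ?thesis
      by simp
  qed (simp add: K_eq)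
  then show "K m x * F k x = h m x - star_coeff_below K F k m x"
    by (simp add: R_def)
qed

lemma star_quotient:
  assumes F: "\<And>j. smooth_fun A (F j)" and low: "\<And>j. j < k \<Longrightarrow> F j = (\<lambda>x. 0)"
    and h: "h \<in> C0_series A {x. F k x \<noteq> 0}"
  shows "star_quotient F k h \<in> C0_series A UNIV"
    and "star Mr (star_quotient F k h) F = shift_series k 1 h"
proof -
  let ?K = "star_quotient F k h"
  note coeff = star_quotient_coeff[where F=F and k=k and h=h, OF F h]
  show K: "?K \<in> C0_series A UNIV"
  proof (rule C0_seriesI)
    show "compact (fsupp (?K m))" for m
      using h by (intro compact_fsupp_subset[OF _ coeff(2)] compact_UN C0_series_compact) simp_all
  qed (simp_all add: coeff(1))
  show "star Mr ?K F = shift_series k 1 h"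
  proof (intro ext)
    fix n x
    show "star Mr ?K F n x = shift_series k 1 h n x"
    proof (cases "n < k")
      case True
      then show ?thesis
        by (simp add: star_coeff_below_order[where K="?K" and F=F and k=k,
              OF C0_series_smooth[OF K] F low]
            shift_series_def)
    next
      case False
      then have "star Mr ?K F n x = star_coeff_below ?K F k (n - k) x + ?K (n - k) x * F k x"
        using star_coeff_split[where K="?K" and F=F and k=k and m="n - k" and x=x,
            OF C0_series_smooth[OF K] F low] by simp
      also have "\<dots> = h (n - k) x"
        by (simp add: coeff(3))
      also have "\<dots> = shift_series k 1 h n x"
        using False by (simp add: shift_series_def)
      finally show ?thesis .
    qed
  qed
qed
end

section \<open>Positive functionals\<close>

lemma fps_nonneg_lowest_coeff:
  assumes "fps_nonneg v" "\<And>n. n < k \<Longrightarrow> v n = 0"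
  shows "Im (v k) = 0 \<and> 0 \<le> Re (v k)"
proof (cases "v k = 0")
  case False
  then have "(LEAST n. v n \<noteq> 0) = k"
    using assms(2) by (intro Least_equality) (auto simp: not_less[symmetric])
  moreover have "v \<noteq> (\<lambda>n. 0)"
    using False by auto
  ultimately show ?thesis
    using assms(1) unfolding fps_nonneg_def by auto
qed simp

lemma cnj_form_nonneg_imp_zero:
  fixes \<alpha> \<beta> :: complex
  assumes "\<And>z. Im (z * \<beta> + cnj z * \<alpha>) = 0 \<and> 0 \<le> Re (z * \<beta> + cnj z * \<alpha>)"
  shows "\<alpha> = 0 \<and> \<beta> = 0"
proof -
  have form: "z * \<beta> + cnj z * \<alpha> = 0" for z
    using assms[of z] assms[of "- z"] by (simp add: complex_eq_iff)
  from form[of 1] have "\<beta> = - \<alpha>"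
    by (simp add: add_eq_0_iff)
  with form[of \<i>] show ?thesis
    by simp
qed

locale positive_star_functional = star_manifold A pb Mr
  for A :: "('m::t2_space set \<times> ('m \<Rightarrow> 'e::euclidean_space)) set" and pb Mr +
  fixes \<omega> :: "(nat \<Rightarrow> 'm \<Rightarrow> complex) \<Rightarrow> (nat \<Rightarrow> complex)"
  assumes positive: "positive_functional A Mr \<omega>"
begin

lemma omega_add:
  "F \<in> C0_series A UNIV \<Longrightarrow> G \<in> C0_series A UNIV \<Longrightarrow> \<omega> (\<lambda>n x. F n x + G n x) = (\<lambda>n. \<omega> F n + \<omega> G n)"
  using positive unfolding positive_functional_def by blast

lemma omega_shift: "F \<in> C0_series A UNIV \<Longrightarrow> \<omega> (shift_series N z F) = shift_fps N z (\<omega> F)"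
  using positive unfolding positive_functional_def by (metis fps_smult_monom fps_cmult_monom)

lemma omega_star_nonneg: "F \<in> C0_series A UNIV \<Longrightarrow> fps_nonneg (\<omega> (star Mr (series_cnj F) F))"
  using positive unfolding positive_functional_def by blast

lemma omega_zero: "\<omega> (\<lambda>n x. 0) = (\<lambda>n. 0)"
  using omega_add[OF zero_in_C0_series zero_in_C0_series] by (simp add: fun_eq_iff)

lemma omega_star_cnj_shift_add:
  fixes N :: nat and z :: complex
  assumes F: "F \<in> C0_series A UNIV" and G: "G \<in> C0_series A UNIV"
  defines "H \<equiv> \<lambda>n x. F n x + shift_series N z G n x"
  shows "\<omega> (star Mr (series_cnj H) H) =
    (\<lambda>n. (\<omega> (star Mr (series_cnj F) F) n + shift_fps N z (\<omega> (star Mr (series_cnj F) G)) n) +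
         (shift_fps N (cnj z) (\<omega> (star Mr (series_cnj G) F)) n +
          shift_fps N z (shift_fps N (cnj z) (\<omega> (star Mr (series_cnj G) G))) n))"
proof -
  let ?Fc = "series_cnj F" and ?Gc = "series_cnj G"
  have C0: "?Fc \<in> C0_series A UNIV" "?Gc \<in> C0_series A UNIV"
    "shift_series N z G \<in> C0_series A UNIV" "shift_series N (cnj z) ?Gc \<in> C0_series A UNIV"
    using F G by (simp_all add: C0_series_cnj C0_series_shift)
  note smooth = C0_series_smooth[OF F] C0_series_smooth[OF G] C0_series_smooth[OF C0(1)]
    C0_series_smooth[OF C0(2)] C0_series_smooth[OF C0(3)] C0_series_smooth[OF C0(4)]
  have H_cnj: "series_cnj H = (\<lambda>n x. ?Fc n x + shift_series N (cnj z) ?Gc n x)"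
    by (simp add: H_def series_cnj_def shift_series_def fun_eq_iff)
  have smooth_H: "smooth_fun A (H n)" for n
    unfolding H_def using smooth by (intro smooth_fun_add)
  have "star Mr (series_cnj H) H = (\<lambda>n x. star Mr ?Fc H n x + star Mr (shift_series N (cnj z) ?Gc) H n x)"
    unfolding H_cnj using smooth smooth_H by (intro star_add_left)
  also have "star Mr ?Fc H = (\<lambda>n x. star Mr ?Fc F n x + shift_series N z (star Mr ?Fc G) n x)"
    unfolding H_def using smooth by (simp add: star_add_right star_shift_right)
  also have "star Mr (shift_series N (cnj z) ?Gc) H =
      (\<lambda>n x. shift_series N (cnj z) (star Mr ?Gc F) n x +
             shift_series N z (shift_series N (cnj z) (star Mr ?Gc G)) n x)"
    unfolding H_def using smooth by (simp add: star_add_right star_shift_right star_shift_left)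
  finally have "star Mr (series_cnj H) H =
    (\<lambda>n x. (star Mr ?Fc F n x + shift_series N z (star Mr ?Fc G) n x) +
           (shift_series N (cnj z) (star Mr ?Gc F) n x +
            shift_series N z (shift_series N (cnj z) (star Mr ?Gc G)) n x))" .
  moreover have "star Mr ?Fc F \<in> C0_series A UNIV" "star Mr ?Fc G \<in> C0_series A UNIV"
    "star Mr ?Gc F \<in> C0_series A UNIV" "star Mr ?Gc G \<in> C0_series A UNIV"
    using C0 smooth by (simp_all add: C0_series_star)
  ultimately show ?thesis
    by (simp add: omega_add omega_shift C0_series_add C0_series_shift)
qed

text \<open>A Cauchy--Schwarz inequality: if \<open>a = \<omega>(G\<^sup>* * F)\<close> or \<open>b = \<omega>(F\<^sup>* * G)\<close> had a first nonzero
  coefficient, at index \<open>m\<close>, then \<open>H = F + z \<lambda>\<^bsup>m+1\<^esup> G\<close> would have \<open>z b\<^sub>m + z\<^sup>* a\<^sub>m\<close> as the lowest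
  coefficient of \<open>\<omega>(H\<^sup>* * H)\<close>, which cannot be \<open>\<ge> 0\<close> for every \<open>z\<close>.\<close>

lemma omega_star_cnj_eq_0:
  assumes F: "F \<in> C0_series A UNIV" and G: "G \<in> C0_series A UNIV"
    and F0: "\<omega> (star Mr (series_cnj F) F) = (\<lambda>n. 0)"
  shows "\<omega> (star Mr (series_cnj G) F) = (\<lambda>n. 0)"
proof (rule ccontr)
  define a where "a = \<omega> (star Mr (series_cnj G) F)"
  define b where "b = \<omega> (star Mr (series_cnj F) G)"
  define c where "c = \<omega> (star Mr (series_cnj G) G)"
  assume "\<omega> (star Mr (series_cnj G) F) \<noteq> (\<lambda>n. 0)"
  then have "\<exists>n. a n \<noteq> 0 \<or> b n \<noteq> 0"
    by (auto simp: a_def)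
  define m where "m = (LEAST n. a n \<noteq> 0 \<or> b n \<noteq> 0)"
  have m: "a m \<noteq> 0 \<or> b m \<noteq> 0"
    unfolding m_def by (rule LeastI_ex) fact
  have below_m: "a n = 0 \<and> b n = 0" if "n < m" for n
    using not_less_Least[OF that[unfolded m_def]] by blast
  have "Im (z * b m + cnj z * a m) = 0 \<and> 0 \<le> Re (z * b m + cnj z * a m)" for z
  proof -
    define H where "H = (\<lambda>n x. F n x + shift_series (Suc m) z G n x)"
    define v where "v = \<omega> (star Mr (series_cnj H) H)"
    have v: "v = (\<lambda>n. shift_fps (Suc m) z b n +
                 (shift_fps (Suc m) (cnj z) a n + shift_fps (Suc m) z (shift_fps (Suc m) (cnj z) c) n))"
      unfolding v_def H_def omega_star_cnj_shift_add[OF F G] F0 a_def b_def c_def by simp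
    have "fps_nonneg v"
      unfolding v_def H_def using F G by (intro omega_star_nonneg C0_series_add C0_series_shift)
    moreover have "v n = 0" if "n < Suc m + m" for n
      using below_m[of "n - Suc m"] that by (auto simp: v shift_fps_def)
    ultimately have "Im (v (Suc m + m)) = 0 \<and> 0 \<le> Re (v (Suc m + m))"
      by (rule fps_nonneg_lowest_coeff)
    moreover have "v (Suc m + m) = z * b m + cnj z * a m"
      by (simp add: v shift_fps_def)
    ultimately show ?thesis
      by simp
  qed
  then have "a m = 0 \<and> b m = 0"
    by (rule cnj_form_nonneg_imp_zero)
  with m show False
    by simp
qed

end

section \<open>Faithfulness and support\<close>

lemma not_in_functional_supp_iff:
  "p \<notin> functional_supp A \<omega> \<longleftrightarrow> (\<exists>W. open W \<and> p \<in> W \<and> (\<forall>F\<in>C0_series A W. \<omega> F = (\<lambda>n. 0)))"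
  unfolding functional_supp_def by blast

context positive_star_functional
begin

lemma faithful_iff:
  "faithful A Mr \<omega> \<longleftrightarrow> (\<forall>F\<in>C0_series A UNIV. \<omega> (star Mr (series_cnj F) F) = (\<lambda>n. 0) \<longrightarrow> F = (\<lambda>n x. 0))"
proof -
  have "star Mr (series_cnj (\<lambda>n x. 0)) (\<lambda>n x. 0) = (\<lambda>n x. 0)"
    by (simp add: series_cnj_def star_zero_left smooth_fun_const)
  then show ?thesis
    unfolding faithful_def using zero_in_C0_series omega_zero by auto
qed

lemma full_support_if_faithful:
  assumes "faithful A Mr \<omega>"
  shows "functional_supp A \<omega> = UNIV"
proof (rule ccontr)
  assume "functional_supp A \<omega> \<noteq> UNIV"
  then obtain p where "p \<notin> functional_supp A \<omega>"
    by blast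
  then obtain W where W: "open W" "p \<in> W" and null: "\<forall>F\<in>C0_series A W. \<omega> F = (\<lambda>n. 0)"
    unfolding not_in_functional_supp_iff by blast
  obtain f where f: "smooth_fun A f" "compact (fsupp f)" "fsupp f \<subseteq> W" "f p \<noteq> 0"
    using smooth_bump_exists[OF W] .
  define F where "F n = (if n = 0 then f else (\<lambda>x. 0))" for n :: nat
  have F: "F \<in> C0_series A W"
    by (rule C0_seriesI) (simp_all add: F_def f smooth_fun_const)
  then have "star Mr (series_cnj F) F \<in> C0_series A W"
    by (intro C0_series_star[OF C0_series_cnj] C0_series_smooth)
  then have "\<omega> (star Mr (series_cnj F) F) = (\<lambda>n. 0)"
    using null by blast
  moreover have "F \<in> C0_series A UNIV"
    using F by (rule C0_series_mono) simp
  ultimately have "F 0 p = 0"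
    using assms unfolding faithful_iff by auto
  with f(4) show False
    by (simp add: F_def)
qed

lemma faithful_if_full_support:
  assumes supp: "functional_supp A \<omega> = UNIV"
  shows "faithful A Mr \<omega>"
  unfolding faithful_iff
proof (intro ballI impI, rule ccontr)
  fix F assume F: "F \<in> C0_series A UNIV" and F0: "\<omega> (star Mr (series_cnj F) F) = (\<lambda>n. 0)"
    and "F \<noteq> (\<lambda>n x. 0)"
  then have "\<exists>k. F k \<noteq> (\<lambda>x. 0)"
    by (auto simp: fun_eq_iff)
  then obtain k where k: "F k \<noteq> (\<lambda>x. 0)" and low: "\<And>j. j < k \<Longrightarrow> F j = (\<lambda>x. 0)"
    unfolding exists_least_iff[of "\<lambda>k. F k \<noteq> (\<lambda>x. 0)"] by blast
  let ?N = "{x. F k x \<noteq> 0}"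
  have "open ?N"
    using smooth_fun_continuous_on[OF C0_series_smooth[OF F]]
    by (simp add: open_Collect_neq continuous_on_const)
  moreover obtain p where "p \<in> ?N"
    using k by auto
  ultimately have "\<not> (\<forall>h\<in>C0_series A ?N. \<omega> h = (\<lambda>n. 0))"
    using supp not_in_functional_supp_iff[of p A \<omega>] by auto
  then obtain h where h: "h \<in> C0_series A ?N" "\<omega> h \<noteq> (\<lambda>n. 0)"
    by blast
  let ?K = "star_quotient F k h"
  note K = star_quotient[where F=F and k=k and h=h, OF C0_series_smooth[OF F] low h(1)]
  have "\<omega> (star Mr (series_cnj (series_cnj ?K)) F) = (\<lambda>n. 0)"
    by (rule omega_star_cnj_eq_0[OF F C0_series_cnj[OF K(1)] F0])
  then have "shift_fps k 1 (\<omega> h) = (\<lambda>n. 0)"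
    using K(2) omega_shift[OF C0_series_mono[OF h(1)]] by (simp add: series_cnj_def)
  with h(2) show False
    by (simp add: shift_fps_eq_0_iff)
qed

end

theorem proposition6:
  fixes A :: "('m::{t2_space, second_countable_topology} set \<times> ('m \<Rightarrow> 'e::euclidean_space)) set"
    and pb :: "('m \<Rightarrow> complex) \<Rightarrow> ('m \<Rightarrow> complex) \<Rightarrow> ('m \<Rightarrow> complex)"
    and Mr :: "nat \<Rightarrow> ('m \<Rightarrow> complex) \<Rightarrow> ('m \<Rightarrow> complex) \<Rightarrow> ('m \<Rightarrow> complex)"
    and \<omega> :: "(nat \<Rightarrow> 'm \<Rightarrow> complex) \<Rightarrow> (nat \<Rightarrow> complex)"
  assumes "smooth_atlas A"
    and "poisson_bracket A pb"
    and "local_star_product A pb Mr"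
    and "positive_functional A Mr \<omega>"
  shows "faithful A Mr \<omega> \<longleftrightarrow> functional_supp A \<omega> = UNIV"
proof -
  interpret positive_star_functional A pb Mr \<omega>
    by unfold_locales (use assms in auto)
  show ?thesis
    using faithful_if_full_support full_support_if_faithful by blast
qed

end
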